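(* Let $G$ be a graph with $\alpha(G)\geq d\geq 2$ and let $v$ be a vertex of $G$. Write $\mathrm{del}(v)=\{\tau\in\Delta_d^t(G): v\notin\tau\}$. (a) If $\alpha(G-v)\leq d-1$, then $\mathrm{del}(v)=\Delta_d^t(G)=\Delta^{N_G(v)}*\Delta_{d-1}^t(G-N_G[v])$. (b) If $\alpha(G-N_G[v])\leq d-2$, then $\mathrm{del}(v)=\Delta_d^t(G-v)$. (c) If $\alpha(G-v)\geq d$ and $\alpha(G-N_G[v])\geq d-1$, then $$\mathrm{del}(v)=\Delta_d^t(G-v)\cup\left(\Delta^{N_G(v)}*\Delta_{d-1}^t(G-N_G[v])\right).$$
   Context: All graphs are finite and simple; $\alpha(G)$ is the independence number, $G[S]$ the induced subgraph on $S$, $G-S=G[V(G)\setminus S]$, $N_G(v)$ the open and $N_G[v]=N_G(v)\cup\{v\}$ the closed neighborhood. For any integer $e\ge1$, $\Delta_e^t(H)=\{\sigma\subseteq V(H):\ \alpha(H[V(H)\setminus\sigma])\geq e\}$. $\Delta^X=\mathcal{P}(X)$ is the full simplex on $X$ (with $\Delta^\emptyset=\{\emptyset\}$), and for complexes on disjoint vertex sets the join is $K*J=\{\tau\cup\sigma:\tau\in K,\sigma\in J\}$. Complexes are compared as families of subsets of $V(G)$. *)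

theory Defs
  imports Main
begin

definition simple_graph :: "'a set \<Rightarrow> ('a \<Rightarrow> 'a \<Rightarrow> bool) \<Rightarrow> bool" where
  "simple_graph V E \<longleftrightarrow> finite V \<and> (\<forall>x y. E x y \<longrightarrow> E y x) \<and> (\<forall>x. \<not> E x x)"

definition indep_set :: "('a \<Rightarrow> 'a \<Rightarrow> bool) \<Rightarrow> 'a set \<Rightarrow> bool" where
  "indep_set E I \<longleftrightarrow> (\<forall>x\<in>I. \<forall>y\<in>I. x \<noteq> y \<longrightarrow> \<not> E x y)"

definition alpha :: "('a \<Rightarrow> 'a \<Rightarrow> bool) \<Rightarrow> 'a set \<Rightarrow> nat" where
  "alpha E S = Max {card I | I. I \<subseteq> S \<and> indep_set E I}"

definition nbhd :: "'a set \<Rightarrow> ('a \<Rightarrow> 'a \<Rightarrow> bool) \<Rightarrow> 'a \<Rightarrow> 'a set" where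
  "nbhd V E v = {u \<in> V. E v u}"

definition closed_nbhd :: "'a set \<Rightarrow> ('a \<Rightarrow> 'a \<Rightarrow> bool) \<Rightarrow> 'a \<Rightarrow> 'a set" where
  "closed_nbhd V E v = insert v (nbhd V E v)"

text \<open>\<Delta>_e^t(H) for the induced subgraph H on vertex set W.\<close>
definition Delta_t :: "('a \<Rightarrow> 'a \<Rightarrow> bool) \<Rightarrow> 'a set \<Rightarrow> nat \<Rightarrow> 'a set set" where
  "Delta_t E W e = {\<sigma>. \<sigma> \<subseteq> W \<and> alpha E (W - \<sigma>) \<ge> e}"

definition full_simplex :: "'a set \<Rightarrow> 'a set set" where
  "full_simplex X = Pow X"

definition join :: "'a set set \<Rightarrow> 'a set set \<Rightarrow> 'a set set" where
  "join K J = {\<tau> \<union> \<sigma> | \<tau> \<sigma>. \<tau> \<in> K \<and> \<sigma> \<in> J}"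

end

theory Submission
  imports Defs
begin

text \<open>
  Every independent set of \<open>G - \<tau>\<close> either avoids \<open>v\<close>, or contains \<open>v\<close> and then, with \<open>v\<close>
  removed, is independent in \<open>G - N[v] - \<tau>\<close>; conversely \<open>v\<close> can be added to any independent
  set of \<open>G - N[v]\<close>. Hence \<open>\<alpha>(W) = max \<alpha>(W - v) (1 + \<alpha>(W - N[v]))\<close>, so a face \<open>\<tau>\<close> avoiding
  \<open>v\<close> lies in \<open>\<Delta>\<^sub>d\<^sup>t(G)\<close> iff it lies in \<open>\<Delta>\<^sub>d\<^sup>t(G - v)\<close> or satisfies \<open>\<alpha>(G - N[v] - \<tau>) \<ge> d - 1\<close>;
  the latter condition ignores \<open>\<tau> \<inter> N(v)\<close>, which is exactly the join. This identity is (c),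
  which in fact needs none of its hypotheses; (a) and (b) follow from it because under their
  hypotheses one of the two complexes is empty.
\<close>

lemma card_le_alpha:
  assumes "finite S" "I \<subseteq> S" "indep_set E I"
  shows "card I \<le> alpha E S"
proof -
  have "finite {card I | I. I \<subseteq> S \<and> indep_set E I}"
    by (rule finite_subset[of _ "{..card S}"]) (auto intro: card_mono assms(1))
  then show ?thesis
    unfolding alpha_def using assms(2,3) by (intro Max_ge) auto
qed

lemma alpha_witness:
  assumes "finite S"
  obtains I where "I \<subseteq> S" "indep_set E I" "card I = alpha E S"
proof -
  let ?M = "{card I | I. I \<subseteq> S \<and> indep_set E I}"
  have "finite ?M"
    by (rule finite_subset[of _ "{..card S}"]) (auto intro: card_mono assms)
  moreover have "card {} \<in> ?M"
    by (auto simp: indep_set_def intro!: exI[of _ "{}"])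
  ultimately have "alpha E S \<in> ?M"
    unfolding alpha_def by (intro Max_in) auto
  then show ?thesis using that by auto
qed

lemma alpha_mono:
  assumes "finite T" "S \<subseteq> T"
  shows "alpha E S \<le> alpha E T"
proof -
  obtain I where "I \<subseteq> S" "indep_set E I" "card I = alpha E S"
    using alpha_witness finite_subset[OF assms(2,1)] by metis
  with assms show ?thesis
    using card_le_alpha[of T I E] by auto
qed

lemma alpha_vertex_recurrence:
  assumes "simple_graph V E" "W \<subseteq> V" "v \<in> W"
  shows "alpha E W = max (alpha E (W - {v})) (Suc (alpha E (W - closed_nbhd V E v)))"
proof (rule antisym)
  have "finite W"
    using assms(1,2) finite_subset unfolding simple_graph_def by blast
  obtain I where I: "I \<subseteq> W" "indep_set E I" "card I = alpha E W"
    using alpha_witness[OF \<open>finite W\<close>] by metis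
  show "alpha E W \<le> max (alpha E (W - {v})) (Suc (alpha E (W - closed_nbhd V E v)))"
  proof (cases "v \<in> I")
    case False
    then have "card I \<le> alpha E (W - {v})"
      using I \<open>finite W\<close> by (intro card_le_alpha) auto
    with I show ?thesis by simp
  next
    case True
    have "I - {v} \<subseteq> W - closed_nbhd V E v"
      using I True unfolding indep_set_def closed_nbhd_def nbhd_def by auto
    moreover have "indep_set E (I - {v})"
      using I(2) unfolding indep_set_def by auto
    ultimately have "card (I - {v}) \<le> alpha E (W - closed_nbhd V E v)"
      using \<open>finite W\<close> by (intro card_le_alpha) auto
    moreover have "card I = Suc (card (I - {v}))"
      using True I(1) \<open>finite W\<close> by (metis card.remove finite_subset)
    ultimately show ?thesis using I by simp
  qed
  have "alpha E (W - {v}) \<le> alpha E W"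
    using \<open>finite W\<close> by (intro alpha_mono) auto
  moreover have "Suc (alpha E (W - closed_nbhd V E v)) \<le> alpha E W"
  proof -
    obtain J where J: "J \<subseteq> W - closed_nbhd V E v" "indep_set E J"
      "card J = alpha E (W - closed_nbhd V E v)"
      using alpha_witness \<open>finite W\<close> by (metis finite_Diff)
    have "v \<notin> J"
      using J(1) unfolding closed_nbhd_def by auto
    have "indep_set E (insert v J)"
      using assms(1,2) J(1,2) unfolding simple_graph_def indep_set_def closed_nbhd_def nbhd_def
      by blast
    then have "card (insert v J) \<le> alpha E W"
      using J(1) assms(3) \<open>finite W\<close> by (intro card_le_alpha) auto
    with J(1,3) \<open>v \<notin> J\<close> \<open>finite W\<close> show ?thesis
      by (metis card_insert_disjoint finite_Diff finite_subset)
  qed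
  ultimately show "max (alpha E (W - {v})) (Suc (alpha E (W - closed_nbhd V E v))) \<le> alpha E W"
    by simp
qed

lemma join_full_simplex_nbhd:
  assumes "\<not> E v v"
  shows "join (full_simplex (nbhd V E v)) (Delta_t E (V - closed_nbhd V E v) k) =
    {\<tau>. \<tau> \<subseteq> V - {v} \<and> k \<le> alpha E (V - closed_nbhd V E v - \<tau>)}"
proof (intro set_eqI iffI)
  fix \<tau> assume "\<tau> \<in> join (full_simplex (nbhd V E v)) (Delta_t E (V - closed_nbhd V E v) k)"
  then obtain A B where AB: "\<tau> = A \<union> B" "A \<subseteq> nbhd V E v" "B \<subseteq> V - closed_nbhd V E v"
    "k \<le> alpha E (V - closed_nbhd V E v - B)"
    unfolding join_def full_simplex_def Delta_t_def by auto
  have "V - closed_nbhd V E v - \<tau> = V - closed_nbhd V E v - B"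
    using AB(1,2) unfolding closed_nbhd_def by auto
  moreover have "\<tau> \<subseteq> V - {v}"
    using AB(1-3) assms unfolding nbhd_def closed_nbhd_def by auto
  ultimately show "\<tau> \<in> {\<tau>. \<tau> \<subseteq> V - {v} \<and> k \<le> alpha E (V - closed_nbhd V E v - \<tau>)}"
    using AB(4) by simp
next
  fix \<tau> assume \<tau>: "\<tau> \<in> {\<tau>. \<tau> \<subseteq> V - {v} \<and> k \<le> alpha E (V - closed_nbhd V E v - \<tau>)}"
  let ?A = "\<tau> \<inter> nbhd V E v" and ?B = "\<tau> - nbhd V E v"
  have "V - closed_nbhd V E v - ?B = V - closed_nbhd V E v - \<tau>"
    unfolding closed_nbhd_def by auto
  with \<tau> have "?A \<in> full_simplex (nbhd V E v)" "?B \<in> Delta_t E (V - closed_nbhd V E v) k"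
    unfolding full_simplex_def Delta_t_def closed_nbhd_def by auto
  moreover have "\<tau> = ?A \<union> ?B" by auto
  ultimately show "\<tau> \<in> join (full_simplex (nbhd V E v)) (Delta_t E (V - closed_nbhd V E v) k)"
    unfolding join_def by blast
qed

lemma Delta_t_deletion:
  assumes "simple_graph V E" "v \<in> V" "d \<ge> 1"
  shows "{\<tau> \<in> Delta_t E V d. v \<notin> \<tau>} = Delta_t E (V - {v}) d \<union>
    join (full_simplex (nbhd V E v)) (Delta_t E (V - closed_nbhd V E v) (d - 1))"
proof -
  have "\<not> E v v"
    using assms(1) unfolding simple_graph_def by auto
  have "d \<le> alpha E (V - \<tau>) \<longleftrightarrow>
      d \<le> alpha E (V - {v} - \<tau>) \<or> d - 1 \<le> alpha E (V - closed_nbhd V E v - \<tau>)"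
    if "v \<notin> \<tau>" for \<tau>
  proof -
    have "alpha E (V - \<tau>) =
        max (alpha E (V - \<tau> - {v})) (Suc (alpha E (V - \<tau> - closed_nbhd V E v)))"
      using that assms(2) by (intro alpha_vertex_recurrence[OF assms(1)]) auto
    moreover have "V - \<tau> - {v} = V - {v} - \<tau>"
      "V - \<tau> - closed_nbhd V E v = V - closed_nbhd V E v - \<tau>"
      by auto
    moreover have "d \<le> Suc (alpha E (V - closed_nbhd V E v - \<tau>)) \<longleftrightarrow>
        d - 1 \<le> alpha E (V - closed_nbhd V E v - \<tau>)"
      using assms(3) by arith
    ultimately show ?thesis
      by (simp add: le_max_iff_disj)
  qed
  then show ?thesis
    unfolding join_full_simplex_nbhd[where E = E and v = v, OF \<open>\<not> E v v\<close>]
    unfolding Delta_t_def by auto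
qed

lemma Delta_t_eq_empty:
  assumes "finite W" "alpha E W < e"
  shows "Delta_t E W e = {}"
proof -
  have "alpha E (W - \<sigma>) < e" for \<sigma>
    using alpha_mono[OF assms(1), of "W - \<sigma>" E] assms(2) by simp
  then show ?thesis
    unfolding Delta_t_def by (simp add: not_le)
qed

lemma Delta_t_avoids_vertex:
  assumes "finite V" "alpha E (V - {v}) < d" "\<sigma> \<in> Delta_t E V d"
  shows "v \<notin> \<sigma>"
proof
  assume "v \<in> \<sigma>"
  then have "alpha E (V - \<sigma>) \<le> alpha E (V - {v})"
    using assms(1) by (intro alpha_mono) auto
  with assms(2,3) show False
    unfolding Delta_t_def by auto
qed

theorem mainTheorem19:
  fixes V :: "'a set" and E :: "'a \<Rightarrow> 'a \<Rightarrow> bool" and v :: 'a and d :: nat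
  assumes "simple_graph V E"
    and "d \<ge> 2" and "alpha E V \<ge> d"
    and "v \<in> V"
  defines "del \<equiv> {\<tau> \<in> Delta_t E V d. v \<notin> \<tau>}"
  shows "(alpha E (V - {v}) \<le> d - 1 \<longrightarrow>
            del = Delta_t E V d \<and>
            Delta_t E V d = join (full_simplex (nbhd V E v))
                                 (Delta_t E (V - closed_nbhd V E v) (d - 1)))
       \<and> (alpha E (V - closed_nbhd V E v) \<le> d - 2 \<longrightarrow>
            del = Delta_t E (V - {v}) d)
       \<and> (alpha E (V - {v}) \<ge> d \<and> alpha E (V - closed_nbhd V E v) \<ge> d - 1 \<longrightarrow>
            del = Delta_t E (V - {v}) d \<union>
                  join (full_simplex (nbhd V E v))
                       (Delta_t E (V - closed_nbhd V E v) (d - 1)))"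
proof -
  have "finite V"
    using assms(1) unfolding simple_graph_def by simp
  have deletion: "del = Delta_t E (V - {v}) d \<union>
      join (full_simplex (nbhd V E v)) (Delta_t E (V - closed_nbhd V E v) (d - 1))"
    unfolding del_def using Delta_t_deletion[OF assms(1,4)] assms(2) by simp
  have empty_join: "join K {} = {}" for K :: "'a set set"
    unfolding join_def by simp
  show ?thesis
  proof (intro conjI impI)
    assume small: "alpha E (V - {v}) \<le> d - 1"
    then show "del = Delta_t E V d"
      unfolding del_def using assms(2) \<open>finite V\<close> Delta_t_avoids_vertex[of V E v d] by auto
    moreover have "Delta_t E (V - {v}) d = {}"
      using small assms(2) \<open>finite V\<close> by (intro Delta_t_eq_empty) auto
    ultimately show "Delta_t E V d = join (full_simplex (nbhd V E v))
        (Delta_t E (V - closed_nbhd V E v) (d - 1))"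
      using deletion by simp
  next
    assume "alpha E (V - closed_nbhd V E v) \<le> d - 2"
    then have "Delta_t E (V - closed_nbhd V E v) (d - 1) = {}"
      using assms(2) \<open>finite V\<close> by (intro Delta_t_eq_empty) auto
    then show "del = Delta_t E (V - {v}) d"
      using deletion empty_join by simp
  qed (rule deletion)
qed

end
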